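(* Let $\{Y_{1\,t}\}_{t\in\mathbb N}$ and $\{Y_{2\,t}\}_{t\in\mathbb N}$ be two real-valued time series with $E(Y_{2\,t}^2)<\infty$ for all $t$, and let $\mathcal F^{(1)}_{t-1}=\sigma(Y_{1\,t-1},Y_{1\,t-2},\ldots)$, $\mathcal F^{(2)}_{t-1}=\sigma(Y_{2\,t-1},Y_{2\,t-2},\ldots)$, $\mathcal F^{(1,2)}_{t-1}=\sigma(\mathcal F^{(1)}_{t-1},\mathcal F^{(2)}_{t-1})$. Consider the three conditions (M) $\Pr\big(E(Y_{2\,t}\mid\mathcal F^{(2)}_{t-1})\neq E(Y_{2\,t}\mid\mathcal F^{(1,2)}_{t-1})\big)>0$ (causality in mean); (V) $\Pr\Big(E\big[(Y_{2\,t}-E(Y_{2\,t}\mid\mathcal F^{(1,2)}_{t-1}))^2\mid\mathcal F^{(2)}_{t-1}\big]\neq E\big[(Y_{2\,t}-E(Y_{2\,t}\mid\mathcal F^{(1,2)}_{t-1}))^2\mid\mathcal F^{(1,2)}_{t-1}\big]\Big)>0$ (causality in variance); (S) $\Pr\Big(E\big[(Y_{2\,t}-E(Y_{2\,t}\mid\mathcal F^{(2)}_{t-1}))^2\mid\mathcal F^{(2)}_{t-1}\big]\neq E\big[(Y_{2\,t}-E(Y_{2\,t}\mid\mathcal F^{(1,2)}_{t-1}))^2\mid\mathcal F^{(1,2)}_{t-1}\big]\Big)>0$. Then (S) holds if at least one of (M) and (V) holds.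
   Context: Condition (V) is the paper's explicit formulation of Granger causality in variance, $\Pr(\mathrm{Var}(Y_{2\,t}\mid\mathcal F^{(2)}_{t-1})\neq \mathrm{Var}(Y_{2\,t}\mid\mathcal F^{(1,2)}_{t-1}))>0$, written with the centering $E(Y_{2\,t}\mid\mathcal F^{(1,2)}_{t-1})$. Condition (S) expresses simultaneous Granger causality in mean and variance from $\{Y_{1\,t}\}$ to $\{Y_{2\,t}\}$. *)

theory Defs
  imports "HOL-Probability.Probability"
begin

text \<open>Sigma algebra on the sample space generated by the past values Y s, s < t,
  of a family of real-valued processes (given as a set of processes).  For t = 0 this is the
  trivial sigma algebra.\<close>
definition past_sigma :: "'a measure \<Rightarrow> (nat \<Rightarrow> 'a \<Rightarrow> real) set \<Rightarrow> nat \<Rightarrow> 'a measure" where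
  "past_sigma M Ys t =
     sigma (space M) (\<Union>Y\<in>Ys. \<Union>s\<in>{..<t}. {Y s -` A \<inter> space M | A. A \<in> sets borel})"

end

theory Submission
  imports Defs
begin

text \<open>For nested sigma algebras G \<subseteq> H write mG = E(Y|G) and mH = E(Y|H).  The mean square
  errors satisfy the Pythagoras identity E (Y - mG)^2 = E (Y - mH)^2 + E (mH - mG)^2.  If (S) fails,
  the two conditional variances agree a.s., hence so do their expectations, the two mean square
  errors; thus mG = mH a.s., which is the failure of (M).  Substituting mG for mH in the conditional
  variance given G then turns the failure of (S) into the failure of (V).\<close>

lemma square_integrable_mult:
  fixes f g :: "'a \<Rightarrow> real"
  assumes [measurable]: "f \<in> borel_measurable M" "g \<in> borel_measurable M"
    and "integrable M (\<lambda>x. (f x)\<^sup>2)" "integrable M (\<lambda>x. (g x)\<^sup>2)"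
  shows "integrable M (\<lambda>x. f x * g x)"
proof (rule Bochner_Integration.integrable_bound)
  show "integrable M (\<lambda>x. (f x)\<^sup>2 + (g x)\<^sup>2)" using assms by auto
  show "AE x in M. norm (f x * g x) \<le> norm ((f x)\<^sup>2 + (g x)\<^sup>2)"
  proof (rule AE_I2)
    fix x
    have "2 * \<bar>f x\<bar> * \<bar>g x\<bar> \<le> \<bar>f x\<bar>\<^sup>2 + \<bar>g x\<bar>\<^sup>2"
      by (rule sum_squares_bound)
    moreover have "0 \<le> \<bar>f x\<bar> * \<bar>g x\<bar>" by simp
    ultimately have "\<bar>f x\<bar> * \<bar>g x\<bar> \<le> (f x)\<^sup>2 + (g x)\<^sup>2"
      unfolding power2_abs by linarith
    then show "norm (f x * g x) \<le> norm ((f x)\<^sup>2 + (g x)\<^sup>2)"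
      by (simp add: abs_mult)
  qed
qed measurable

lemma square_integrable_diff:
  fixes f g :: "'a \<Rightarrow> real"
  assumes "f \<in> borel_measurable M" "g \<in> borel_measurable M"
    and "integrable M (\<lambda>x. (f x)\<^sup>2)" "integrable M (\<lambda>x. (g x)\<^sup>2)"
  shows "integrable M (\<lambda>x. (f x - g x)\<^sup>2)"
proof -
  have "integrable M (\<lambda>x. (f x)\<^sup>2 - 2 * (f x * g x) + (g x)\<^sup>2)"
    using square_integrable_mult[OF assms] assms by auto
  then show ?thesis by (simp add: power2_diff algebra_simps)
qed

lemma (in sigma_finite_subalgebra) square_integrable_real_cond_exp:
  assumes "integrable M Y" "integrable M (\<lambda>x. (Y x)\<^sup>2)"
  shows "integrable M (\<lambda>x. (real_cond_exp M F Y x)\<^sup>2)"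
proof -
  have "convex_on UNIV (\<lambda>x::real. x ^ 2)" by (rule convex_power_even) simp
  then show ?thesis
    by (intro integrable_convex_cond_exp[where I = UNIV and q = "\<lambda>x. x ^ 2"]) (use assms in auto)
qed

lemma (in sigma_finite_subalgebra) square_integrable_real_cond_exp_error:
  assumes "Y \<in> borel_measurable M" "integrable M Y" "integrable M (\<lambda>x. (Y x)\<^sup>2)"
  shows "integrable M (\<lambda>x. (Y x - real_cond_exp M F Y x)\<^sup>2)"
  using assms by (intro square_integrable_diff square_integrable_real_cond_exp) simp_all

lemma mean_square_error_real_cond_exp_nested:
  fixes Y :: "'a \<Rightarrow> real"
  assumes G: "sigma_finite_subalgebra M G" and H: "sigma_finite_subalgebra M H"
    and GH: "sets G \<subseteq> sets H"
    and [measurable]: "Y \<in> borel_measurable M"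
    and Y: "integrable M Y" and Y2: "integrable M (\<lambda>x. (Y x)\<^sup>2)"
  defines "mG \<equiv> real_cond_exp M G Y" and "mH \<equiv> real_cond_exp M H Y"
  shows "(\<integral>x. (Y x - mG x)\<^sup>2 \<partial>M)
    = (\<integral>x. (Y x - mH x)\<^sup>2 \<partial>M) + (\<integral>x. (mH x - mG x)\<^sup>2 \<partial>M)"
proof -
  interpret G: sigma_finite_subalgebra M G by (rule G)
  interpret H: sigma_finite_subalgebra M H by (rule H)
  have [measurable]: "mG \<in> borel_measurable M" "mH \<in> borel_measurable M"
    "mH \<in> borel_measurable H" unfolding mG_def mH_def by simp_all
  have "subalgebra H G" using GH G.subalg H.subalg by (simp add: subalgebra_def)
  then have "mG \<in> borel_measurable H"
    unfolding mG_def by (rule measurable_from_subalg) simp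
  then have D_H [measurable]: "(\<lambda>x. mH x - mG x) \<in> borel_measurable H" by measurable
  have mG2: "integrable M (\<lambda>x. (mG x)\<^sup>2)" and mH2: "integrable M (\<lambda>x. (mH x)\<^sup>2)"
    unfolding mG_def mH_def using G.square_integrable_real_cond_exp H.square_integrable_real_cond_exp Y Y2
    by blast+
  have errH: "integrable M (\<lambda>x. (Y x - mH x)\<^sup>2)" and D2: "integrable M (\<lambda>x. (mH x - mG x)\<^sup>2)"
    by (intro square_integrable_diff; use Y2 mG2 mH2 in simp)+
  have DY: "integrable M (\<lambda>x. (mH x - mG x) * Y x)"
    and DmH: "integrable M (\<lambda>x. (mH x - mG x) * mH x)"
    by (intro square_integrable_mult; use D2 Y2 mH2 in simp)+
  \<comment> \<open>the cross term vanishes because mH - mG is H-measurable\<close>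
  have cross: "(\<integral>x. (mH x - mG x) * mH x \<partial>M) = (\<integral>x. (mH x - mG x) * Y x \<partial>M)"
    using H.real_cond_exp_intg(2)[OF DY D_H] unfolding mH_def by simp
  have "(\<lambda>x. (Y x - mG x)\<^sup>2) = (\<lambda>x. ((Y x - mH x)\<^sup>2 + (mH x - mG x)\<^sup>2)
      + 2 * ((mH x - mG x) * Y x - (mH x - mG x) * mH x))"
    by (simp add: power2_eq_square algebra_simps)
  then show ?thesis using errH D2 DY DmH cross by simp
qed

lemma real_cond_exp_nested_AE_eq_if_cond_var_AE_eq:
  fixes Y :: "'a \<Rightarrow> real"
  assumes G: "sigma_finite_subalgebra M G" and H: "sigma_finite_subalgebra M H"
    and GH: "sets G \<subseteq> sets H"
    and [measurable]: "Y \<in> borel_measurable M"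
    and Y: "integrable M Y" and Y2: "integrable M (\<lambda>x. (Y x)\<^sup>2)"
    and var: "AE x in M. real_cond_exp M G (\<lambda>y. (Y y - real_cond_exp M G Y y)\<^sup>2) x
                = real_cond_exp M H (\<lambda>y. (Y y - real_cond_exp M H Y y)\<^sup>2) x"
  shows "AE x in M. real_cond_exp M G Y x = real_cond_exp M H Y x"
proof -
  interpret G: sigma_finite_subalgebra M G by (rule G)
  interpret H: sigma_finite_subalgebra M H by (rule H)
  define mG where "mG = real_cond_exp M G Y"
  define mH where "mH = real_cond_exp M H Y"
  have errG: "integrable M (\<lambda>x. (Y x - mG x)\<^sup>2)" and errH: "integrable M (\<lambda>x. (Y x - mH x)\<^sup>2)"
    unfolding mG_def mH_def using G.square_integrable_real_cond_exp_error H.square_integrable_real_cond_exp_error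
      Y Y2 by simp_all
  have D2: "integrable M (\<lambda>x. (mH x - mG x)\<^sup>2)"
    unfolding mG_def mH_def using G.square_integrable_real_cond_exp H.square_integrable_real_cond_exp Y Y2
    by (intro square_integrable_diff) simp_all
  have "(\<integral>x. (Y x - mG x)\<^sup>2 \<partial>M) = (\<integral>x. real_cond_exp M G (\<lambda>y. (Y y - mG y)\<^sup>2) x \<partial>M)"
    using G.real_cond_exp_int(2)[OF errG] by simp
  also have "\<dots> = (\<integral>x. real_cond_exp M H (\<lambda>y. (Y y - mH y)\<^sup>2) x \<partial>M)"
    by (rule integral_cong_AE) (use var in \<open>simp_all add: mG_def mH_def\<close>)
  also have "\<dots> = (\<integral>x. (Y x - mH x)\<^sup>2 \<partial>M)"
    using H.real_cond_exp_int(2)[OF errH] by simp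
  finally have "(\<integral>x. (mH x - mG x)\<^sup>2 \<partial>M) = 0"
    using mean_square_error_real_cond_exp_nested[OF G H GH _ Y Y2] by (simp add: mG_def mH_def)
  then have "AE x in M. (mH x - mG x)\<^sup>2 = 0"
    using integral_nonneg_eq_0_iff_AE[OF D2] by simp
  then show ?thesis unfolding mG_def mH_def by eventually_elim simp
qed

lemma (in finite_measure) measure_neq_pos_iff_not_AE_eq:
  fixes f g :: "'a \<Rightarrow> real"
  assumes [measurable]: "f \<in> borel_measurable M" "g \<in> borel_measurable M"
  shows "measure M {x \<in> space M. f x \<noteq> g x} > 0 \<longleftrightarrow> \<not> (AE x in M. f x = g x)"
proof -
  have "{x \<in> space M. f x \<noteq> g x} \<in> sets M" by measurable
  then show ?thesis
    by (simp add: AE_iff_measurable[OF _ refl] emeasure_eq_measure zero_less_measure_iff)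
qed

lemma past_sigma_subalgebra:
  assumes "\<And>Y s. Y \<in> Ys \<Longrightarrow> Y s \<in> borel_measurable M"
  shows "subalgebra M (past_sigma M Ys t)"
proof -
  let ?A = "\<Union>Y\<in>Ys. \<Union>s\<in>{..<t}. {Y s -` A \<inter> space M | A. A \<in> sets borel}"
  have A: "?A \<subseteq> sets M" using assms by (auto intro: measurable_sets)
  then have "?A \<subseteq> Pow (space M)" using sets.space_closed by blast
  then have "sets (past_sigma M Ys t) = sigma_sets (space M) ?A"
    and "space (past_sigma M Ys t) = space M"
    unfolding past_sigma_def by (simp_all only: sets_measure_of space_measure_of_conv)
  moreover have "sigma_sets (space M) ?A \<subseteq> sets M" using A by (rule sets.sigma_sets_subset)
  ultimately show ?thesis unfolding subalgebra_def by simp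
qed

lemma (in finite_measure) sigma_finite_subalgebra_past_sigma:
  assumes "\<And>Y s. Y \<in> Ys \<Longrightarrow> Y s \<in> borel_measurable M"
  shows "sigma_finite_subalgebra M (past_sigma M Ys t)"
  by (intro finite_measure_subalgebra_is_sigma_finite finite_measure_subalgebra.intro
      finite_measure_subalgebra_axioms.intro past_sigma_subalgebra assms)
    unfold_locales

lemma past_sigma_mono:
  assumes "Ys \<subseteq> Ys'"
  shows "sets (past_sigma M Ys t) \<subseteq> sets (past_sigma M Ys' t)"
proof -
  let ?A = "\<lambda>Ys. \<Union>Y\<in>Ys. \<Union>s\<in>{..<t}. {Y s -` A \<inter> space M | A. A \<in> sets borel}"
  have "?A Ys \<subseteq> Pow (space M)" "?A Ys' \<subseteq> Pow (space M)" by blast+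
  moreover have "?A Ys \<subseteq> ?A Ys'" using assms by blast
  ultimately show ?thesis unfolding past_sigma_def
    by (simp only: sets_measure_of) (rule sigma_sets_mono')
qed

theorem proposition1:
  fixes M :: "'a measure" and Y1 Y2 :: "nat \<Rightarrow> 'a \<Rightarrow> real" and t :: nat
  assumes "prob_space M"
    and "\<And>s. Y1 s \<in> borel_measurable M"
    and "\<And>s. Y2 s \<in> borel_measurable M"
    and "\<And>s. integrable M (\<lambda>x. (Y2 s x)\<^sup>2)"
  defines "F2 \<equiv> past_sigma M {Y2} t"
    and "F12 \<equiv> past_sigma M {Y1, Y2} t"
  defines "CM \<equiv> prob_space.prob M {x \<in> space M.
                  real_cond_exp M F2 (Y2 t) x \<noteq> real_cond_exp M F12 (Y2 t) x} > 0"
    and "CV \<equiv> prob_space.prob M {x \<in> space M.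
                  real_cond_exp M F2 (\<lambda>y. (Y2 t y - real_cond_exp M F12 (Y2 t) y)\<^sup>2) x
                  \<noteq> real_cond_exp M F12 (\<lambda>y. (Y2 t y - real_cond_exp M F12 (Y2 t) y)\<^sup>2) x} > 0"
    and "CS \<equiv> prob_space.prob M {x \<in> space M.
                  real_cond_exp M F2 (\<lambda>y. (Y2 t y - real_cond_exp M F2 (Y2 t) y)\<^sup>2) x
                  \<noteq> real_cond_exp M F12 (\<lambda>y. (Y2 t y - real_cond_exp M F12 (Y2 t) y)\<^sup>2) x} > 0"
  shows "CM \<or> CV \<Longrightarrow> CS"
proof -
  interpret prob_space M by (rule assms(1))
  have F2: "sigma_finite_subalgebra M F2" and F12: "sigma_finite_subalgebra M F12"
    unfolding F2_def F12_def by (intro sigma_finite_subalgebra_past_sigma; use assms(2,3) in blast)+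
  have F2_F12: "sets F2 \<subseteq> sets F12" unfolding F2_def F12_def by (rule past_sigma_mono) blast
  have Y: "integrable M (Y2 t)" using square_integrable_imp_integrable assms(3,4) by blast
  show "CM \<or> CV \<Longrightarrow> CS"
  proof (erule contrapos_pp)
    assume "\<not> CS"
    then have var: "AE x in M. real_cond_exp M F2 (\<lambda>y. (Y2 t y - real_cond_exp M F2 (Y2 t) y)\<^sup>2) x
        = real_cond_exp M F12 (\<lambda>y. (Y2 t y - real_cond_exp M F12 (Y2 t) y)\<^sup>2) x"
      unfolding CS_def by (simp add: measure_neq_pos_iff_not_AE_eq)
    have mean: "AE x in M. real_cond_exp M F2 (Y2 t) x = real_cond_exp M F12 (Y2 t) x"
      by (rule real_cond_exp_nested_AE_eq_if_cond_var_AE_eq[OF F2 F12 F2_F12 assms(3) Y assms(4) var])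
    then have "AE x in M. (Y2 t x - real_cond_exp M F12 (Y2 t) x)\<^sup>2
        = (Y2 t x - real_cond_exp M F2 (Y2 t) x)\<^sup>2"
      by eventually_elim simp
    then have "AE x in M. real_cond_exp M F2 (\<lambda>y. (Y2 t y - real_cond_exp M F12 (Y2 t) y)\<^sup>2) x
        = real_cond_exp M F2 (\<lambda>y. (Y2 t y - real_cond_exp M F2 (Y2 t) y)\<^sup>2) x"
      by (rule sigma_finite_subalgebra.real_cond_exp_cong[OF F2]) (use assms(3) in simp_all)
    with var have "AE x in M. real_cond_exp M F2 (\<lambda>y. (Y2 t y - real_cond_exp M F12 (Y2 t) y)\<^sup>2) x
        = real_cond_exp M F12 (\<lambda>y. (Y2 t y - real_cond_exp M F12 (Y2 t) y)\<^sup>2) x"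
      by eventually_elim simp
    with mean show "\<not> (CM \<or> CV)" unfolding CM_def CV_def
      by (simp add: measure_neq_pos_iff_not_AE_eq)
  qed
qed

end
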